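(* Let $d\ge0$, $s,m\ge1$, and let $\mathbf{M}_0\in\mathbb{Z}^{s\times m}$ be an integer matrix such that $\bm{u}\mapsto\mathbf{M}_0\bm{u}$ is injective on $\{0,1\}^m$. Let $\mathbf{P}=\mathbf{H}_{2^d}\otimes\mathbf{M}_0$ and let $\mathbf{Q}^1,\mathbf{Q}^2$ be real matrices with $\mathbf{Q}^1-\mathbf{Q}^2=\mathbf{P}$, and $\mathbf{Q}=\begin{bmatrix}\mathbf{Q}^1\\ \mathbf{Q}^2\end{bmatrix}$. Let $\bm{x}=(\bm{x}_1,\dots,\bm{x}_{2^d})\in\{0,1\}^{2^dm}$ (blocks $\bm{x}_i\in\{0,1\}^m$), $\bm{n}'\in\mathbb{R}^{2^{d+1}s}$ and $\bm{y}'=\mathbf{Q}\bm{x}+\bm{n}'$. Consider the decoder: (1) compute $\bm{y}=\bm{y}'_u-\bm{y}'_l$ (upper half minus lower half of $\bm{y}'$); (2) compute $T_d(\bm{y})$ and split it into consecutive blocks $\bm{w}_1,\dots,\bm{w}_{2^d}\in\mathbb{R}^s$; (3) round each entry of each $\bm{w}_i$ to a nearest integer, obtaining $\tilde{\bm{w}}_i$; if $\tilde{\bm{w}}_i=\mathbf{M}_0\bm{u}$ for some (necessarily unique) $\bm{u}\in\{0,1\}^m$ output $\hat{\bm{x}}_i=\bm{u}$, otherwise output an arbitrary $\hat{\bm{x}}_i\in\{0,1\}^m$. Then the number of indices $i$ with $\hat{\bm{x}}_i\neq\bm{x}_i$ is at most $4\cdot 2^{-d}\lVert\bm{y}-\mathbf{P}\bm{x}\rVert_2^2\le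 8\cdot2^{-d}\lVert\bm{n}'\rVert_2^2$; in particular $\hat{\bm{x}}=(\hat{\bm{x}}_1,\dots,\hat{\bm{x}}_{2^d})$ differs from $\bm{x}$ in at most $8m\,2^{-d}\lVert\bm{n}'\rVert_2^2$ coordinates.
   Context: $\mathbf{H}_{2^d}$ is the Sylvester-type Hadamard matrix: $\mathbf{H}_1=[1]$, $\mathbf{H}_{2k}=\begin{bmatrix}\mathbf{H}_k&\mathbf{H}_k\\ \mathbf{H}_k&-\mathbf{H}_k\end{bmatrix}$; $\otimes$ is the Kronecker product. The map $T_d:\mathbb{R}^{2^ds}\to\mathbb{R}^{2^ds}$ is defined recursively by $T_0(\bm{v})=\bm{v}$ and, for $d\ge1$, with $\bm{v}=(\bm{v}_u,\bm{v}_l)$ split into upper and lower halves, $T_d(\bm{v})=\big(T_{d-1}(\tfrac{\bm{v}_u+\bm{v}_l}{2}),T_{d-1}(\tfrac{\bm{v}_u-\bm{v}_l}{2})\big)$. *)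

theory Defs
  imports Complex_Main
begin

(* Vectors are functions nat => real (index i < length), matrices nat => nat => _ . *)

fun hadamard :: "nat \<Rightarrow> nat \<Rightarrow> nat \<Rightarrow> int" where
  "hadamard 0 i j = 1"
| "hadamard (Suc d) i j =
     (if i < 2^d then (if j < 2^d then hadamard d i j else hadamard d i (j - 2^d))
      else (if j < 2^d then hadamard d (i - 2^d) j else - hadamard d (i - 2^d) (j - 2^d)))"

definition kron_hadamard :: "nat \<Rightarrow> nat \<Rightarrow> nat \<Rightarrow> (nat \<Rightarrow> nat \<Rightarrow> int) \<Rightarrow> nat \<Rightarrow> nat \<Rightarrow> int" where
  "kron_hadamard d s m M0 i j = hadamard d (i div s) (j div m) * M0 (i mod s) (j mod m)"

definition mat_vec :: "(nat \<Rightarrow> nat \<Rightarrow> real) \<Rightarrow> nat \<Rightarrow> (nat \<Rightarrow> real) \<Rightarrow> nat \<Rightarrow> real" where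
  "mat_vec A n x i = (\<Sum>j<n. A i j * x j)"

fun T_map :: "nat \<Rightarrow> nat \<Rightarrow> (nat \<Rightarrow> real) \<Rightarrow> nat \<Rightarrow> real" where
  "T_map s 0 v = v"
| "T_map s (Suc d) v = (\<lambda>i. if i < 2^d * s
       then T_map s d (\<lambda>j. (v j + v (j + 2^d * s)) / 2) i
       else T_map s d (\<lambda>j. (v j - v (j + 2^d * s)) / 2) (i - 2^d * s))"

definition binary_vec :: "nat \<Rightarrow> (nat \<Rightarrow> real) \<Rightarrow> bool" where
  "binary_vec n u \<longleftrightarrow> (\<forall>k<n. u k = 0 \<or> u k = 1)"

definition int_mat_vec :: "(nat \<Rightarrow> nat \<Rightarrow> int) \<Rightarrow> nat \<Rightarrow> (nat \<Rightarrow> real) \<Rightarrow> nat \<Rightarrow> real" where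
  "int_mat_vec M0 m u r = (\<Sum>k<m. of_int (M0 r k) * u k)"

definition inj_on_binary :: "nat \<Rightarrow> nat \<Rightarrow> (nat \<Rightarrow> nat \<Rightarrow> int) \<Rightarrow> bool" where
  "inj_on_binary s m M0 \<longleftrightarrow>
     (\<forall>u v. binary_vec m u \<longrightarrow> binary_vec m v \<longrightarrow>
        (\<forall>r<s. int_mat_vec M0 m u r = int_mat_vec M0 m v r) \<longrightarrow> (\<forall>k<m. u k = v k))"

definition sqnorm :: "nat \<Rightarrow> (nat \<Rightarrow> real) \<Rightarrow> real" where
  "sqnorm n v = (\<Sum>i<n. (v i)^2)"

end

theory Submission
  imports Defs
begin

(* The map T_d inverts the block transform H_{2^d} (x) I_s, i.e. T_d ((H_{2^d} (x) I_s) c) = c,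
   and it scales squared Euclidean norms by 2^-d.
   Hence, by linearity, T_d y = (M0 x_1, ..., M0 x_{2^d}) + T_d (y - P x): each block is an
   integer codeword plus an error.  A block can only be decoded wrongly if rounding misses
   that codeword in some coordinate, which needs an error of size at least 1/2 there, so
   every wrong block costs at least 1/4 of |T_d (y - P x)|^2 = 2^-d |y - P x|^2.  Finally
   y - P x is the difference of the two halves of n', whose squared norm is at most 2 |n'|^2. *)

lemma sum_lessThan_add:
  fixes f :: "nat \<Rightarrow> 'a::comm_monoid_add"
  shows "(\<Sum>i<n + k. f i) = (\<Sum>i<n. f i) + (\<Sum>i<k. f (i + n))"
  by (induction k) (simp_all add: add_ac)

lemma sum_lessThan_double:
  fixes f :: "nat \<Rightarrow> 'a::comm_monoid_add"
  shows "(\<Sum>i<2 * n. f i) = (\<Sum>i<n. f i) + (\<Sum>i<n. f (i + n))"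
  using sum_lessThan_add[of f n n] by (simp add: mult_2)

lemma sum_lessThan_mult_blocks:
  fixes f :: "nat \<Rightarrow> 'a::comm_monoid_add"
  shows "(\<Sum>j<n * m. f j) = (\<Sum>i<n. \<Sum>k<m. f (i * m + k))"
proof (induction n)
  case (Suc n)
  have "(\<Sum>j<Suc n * m. f j) = (\<Sum>j<n * m. f j) + (\<Sum>k<m. f (k + n * m))"
    using sum_lessThan_add[of f "n * m" m] by (simp add: add.commute)
  then show ?case using Suc by (simp add: add.commute)
qed simp

lemma T_map_cong:
  assumes "\<And>j. j < 2^d * s \<Longrightarrow> u j = v j" and "i < 2^d * s"
  shows "T_map s d u i = T_map s d v i"
  using assms
proof (induction d arbitrary: u v i)
  case (Suc d)
  let ?N = "2^d * s"
  have N2: "2^Suc d * s = ?N + ?N" by simp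
  have uv: "u j = v j" "u (j + ?N) = v (j + ?N)" if "j < ?N" for j
    using Suc.prems(1)[unfolded N2, of j] Suc.prems(1)[unfolded N2, of "j + ?N"] that by simp_all
  show ?case
  proof (cases "i < ?N")
    case True
    then show ?thesis using Suc.IH[of _ _ i] uv by simp
  next
    case False
    with Suc.prems(2) have "i - ?N < ?N" unfolding N2 by linarith
    with False show ?thesis using Suc.IH[of _ _ "i - ?N"] uv by simp
  qed
qed simp

lemma T_map_diff: "T_map s d (\<lambda>j. u j - v j) i = T_map s d u i - T_map s d v i"
proof (induction d arbitrary: u v i)
  case (Suc d)
  let ?N = "2^d * s"
  have "(\<lambda>j. (u j - v j + (u (j + ?N) - v (j + ?N))) / 2)
      = (\<lambda>j. (u j + u (j + ?N)) / 2 - (v j + v (j + ?N)) / 2)"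
   and "(\<lambda>j. (u j - v j - (u (j + ?N) - v (j + ?N))) / 2)
      = (\<lambda>j. (u j - u (j + ?N)) / 2 - (v j - v (j + ?N)) / 2)"
    by (simp_all add: fun_eq_iff field_simps)
  then show ?case by (simp add: Suc.IH)
qed simp

lemma T_map_sum_squares:
  "(\<Sum>i<2^d * s. (T_map s d v i)^2) = (\<Sum>i<2^d * s. (v i)^2) / 2^d"
proof (induction d arbitrary: v)
  case (Suc d)
  let ?N = "2^d * s"
  let ?a = "\<lambda>j. (v j + v (j + ?N)) / 2" and ?b = "\<lambda>j. (v j - v (j + ?N)) / 2"
  have N2: "2^Suc d * s = 2 * ?N" by simp
  have "(\<Sum>i<2^Suc d * s. (T_map s (Suc d) v i)^2)
      = (\<Sum>i<?N. (T_map s d ?a i)^2) + (\<Sum>i<?N. (T_map s d ?b i)^2)"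
    unfolding N2 sum_lessThan_double by simp
  also have "\<dots> = (\<Sum>i<?N. (?a i)^2 + (?b i)^2) / 2^d"
    by (simp add: Suc.IH add_divide_distrib sum.distrib)
  also have "\<dots> = (\<Sum>i<?N. ((v i)^2 + (v (i + ?N))^2) / 2) / 2^d"
    by (intro arg_cong[where f = "\<lambda>t. t / 2^d"] sum.cong) (simp_all add: power2_eq_square field_simps)
  also have "\<dots> = (\<Sum>i<2^Suc d * s. (v i)^2) / 2^Suc d"
    unfolding N2 sum_lessThan_double by (simp add: sum.distrib sum_divide_distrib[symmetric])
  finally show ?case .
qed simp

lemma sum_hadamard_Suc_top:
  assumes "a < 2^d"
  shows "(\<Sum>b<2^Suc d. of_int (hadamard (Suc d) a b) * g b)
       = (\<Sum>b<2^d. of_int (hadamard d a b) * (g b + g (b + 2^d)) :: real)"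
  using assms by (simp add: sum_lessThan_double sum.distrib distrib_left)

lemma sum_hadamard_Suc_bottom:
  assumes "a < 2^d"
  shows "(\<Sum>b<2^Suc d. of_int (hadamard (Suc d) (a + 2^d) b) * g b)
       = (\<Sum>b<2^d. of_int (hadamard d a b) * (g b - g (b + 2^d)) :: real)"
  using assms by (simp add: sum_lessThan_double sum_subtractf sum_negf right_diff_distrib)

lemma T_map_hadamard_synthesis:
  assumes "i < 2^d * s"
  shows "T_map s d (\<lambda>j. \<Sum>b<2^d. of_int (hadamard d (j div s) b) * c b (j mod s)) i
       = c (i div s) (i mod s)"
  using assms
proof (induction d arbitrary: c i)
  case (Suc d)
  let ?N = "2^d * s"
  let ?v = "\<lambda>j. \<Sum>b<2^Suc d. of_int (hadamard (Suc d) (j div s) b) * c b (j mod s)"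
  have "s > 0" using Suc.prems by (cases s) auto
  then have shift: "(j + ?N) div s = j div s + 2^d" "(j + ?N) mod s = j mod s" for j
    by simp_all
  have halves: "(?v j + ?v (j + ?N)) / 2 = (\<Sum>b<2^d. of_int (hadamard d (j div s) b) * c b (j mod s))"
               "(?v j - ?v (j + ?N)) / 2 = (\<Sum>b<2^d. of_int (hadamard d (j div s) b) * c (b + 2^d) (j mod s))"
    if "j < ?N" for j
  proof -
    have "j div s < 2^d" using that \<open>s > 0\<close> by (simp add: div_less_iff_less_mult)
    then show "(?v j + ?v (j + ?N)) / 2 = (\<Sum>b<2^d. of_int (hadamard d (j div s) b) * c b (j mod s))"
                    "(?v j - ?v (j + ?N)) / 2 = (\<Sum>b<2^d. of_int (hadamard d (j div s) b) * c (b + 2^d) (j mod s))"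
      by (simp_all only: shift sum_hadamard_Suc_top sum_hadamard_Suc_bottom)
         (simp_all add: sum.distrib[symmetric] sum_subtractf[symmetric] sum_divide_distrib algebra_simps)
  qed
  show ?case
  proof (cases "i < ?N")
    case True
    then have "T_map s (Suc d) ?v i = T_map s d (\<lambda>j. (?v j + ?v (j + ?N)) / 2) i"
      by simp
    also have "\<dots> = T_map s d (\<lambda>j. \<Sum>b<2^d. of_int (hadamard d (j div s) b) * c b (j mod s)) i"
      using halves(1) True by (rule T_map_cong)
    also have "\<dots> = c (i div s) (i mod s)"
      using True by (rule Suc.IH)
    finally show ?thesis .
  next
    case False
    have "2^Suc d * s = ?N + ?N" by simp
    with False Suc.prems have i': "i - ?N < ?N" by linarith
    from False have "T_map s (Suc d) ?v i = T_map s d (\<lambda>j. (?v j - ?v (j + ?N)) / 2) (i - ?N)"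
      by simp
    also have "\<dots> = T_map s d (\<lambda>j. \<Sum>b<2^d. of_int (hadamard d (j div s) b) * c (b + 2^d) (j mod s)) (i - ?N)"
      using halves(2) i' by (rule T_map_cong)
    also have "\<dots> = c ((i - ?N) div s + 2^d) ((i - ?N) mod s)"
      using i' by (rule Suc.IH)
    also have "\<dots> = c (i div s) (i mod s)"
      using shift[of "i - ?N"] False by simp
    finally show ?thesis .
  qed
qed simp

lemma mat_vec_kron_hadamard:
  "mat_vec (\<lambda>a b. of_int (kron_hadamard d s m M0 a b)) (2^d * m) x i
     = (\<Sum>b<2^d. of_int (hadamard d (i div s) b) * int_mat_vec M0 m (\<lambda>k. x (b * m + k)) (i mod s))"
proof -
  have "mat_vec (\<lambda>a b. of_int (kron_hadamard d s m M0 a b)) (2^d * m) x i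
      = (\<Sum>b<2^d. \<Sum>k<m. of_int (kron_hadamard d s m M0 i (b * m + k)) * x (b * m + k))"
    unfolding mat_vec_def by (rule sum_lessThan_mult_blocks)
  also have "\<dots> = (\<Sum>b<2^d. \<Sum>k<m. of_int (hadamard d (i div s) b) * (of_int (M0 (i mod s) k) * x (b * m + k)))"
    by (intro sum.cong refl) (simp add: kron_hadamard_def)
  finally show ?thesis
    unfolding int_mat_vec_def by (simp add: sum_distrib_left)
qed

lemma T_map_kron_hadamard:
  assumes "i < 2^d * s"
  shows "T_map s d (mat_vec (\<lambda>a b. of_int (kron_hadamard d s m M0 a b)) (2^d * m) x) i
       = int_mat_vec M0 m (\<lambda>k. x (i div s * m + k)) (i mod s)"
  unfolding mat_vec_kron_hadamard using assms by (rule T_map_hadamard_synthesis)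

lemma block_index_less:
  fixes i r n s :: nat
  assumes "i < n" and "r < s"
  shows "i * s + r < n * s"
proof -
  have "i * s + r < Suc i * s" using assms(2) by simp
  also have "\<dots> \<le> n * s" using assms(1) by (intro mult_right_mono) auto
  finally show ?thesis .
qed

lemma binary_vec_block:
  assumes "binary_vec (n * m) x" and "i < n"
  shows "binary_vec m (\<lambda>k. x (i * m + k))"
  using assms block_index_less[OF assms(2)] unfolding binary_vec_def by blast

lemma int_mat_vec_binary_Ints:
  assumes "binary_vec m u"
  shows "int_mat_vec M0 m u r \<in> \<int>"
  unfolding int_mat_vec_def
proof (rule Ints_sum)
  fix k assume "k \<in> {..<m}"
  with assms have "u k = 0 \<or> u k = 1" unfolding binary_vec_def by simp
  then show "of_int (M0 r k) * u k \<in> \<int>" by auto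
qed

lemma nearest_int_far_from_other_ints:
  fixes w :: real and wt z :: int
  assumes "\<forall>z'::int. \<bar>w - of_int wt\<bar> \<le> \<bar>w - of_int z'\<bar>" and "wt \<noteq> z"
  shows "1/2 \<le> \<bar>w - of_int z\<bar>"
proof -
  have "1 \<le> \<bar>wt - z\<bar>" using assms(2) by arith
  then have "1 \<le> \<bar>of_int wt - (of_int z :: real)\<bar>"
    by (metis of_int_1_le_iff of_int_abs of_int_diff)
  moreover have "\<bar>w - of_int wt\<bar> \<le> \<bar>w - of_int z\<bar>" using assms(1) by blast
  ultimately show ?thesis by linarith
qed

lemma card_le_sum_blocks:
  fixes f :: "nat \<Rightarrow> real"
  assumes nonneg: "\<And>j. 0 \<le> f j"
    and large: "\<And>i. i < n \<Longrightarrow> P i \<Longrightarrow> \<exists>r<s. a \<le> f (i * s + r)"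
  shows "a * card {i. i < n \<and> P i} \<le> (\<Sum>j<n * s. f j)"
proof -
  let ?B = "{i. i < n \<and> P i}"
  have "a * card ?B = (\<Sum>i\<in>?B. a)" by simp
  also have "\<dots> \<le> (\<Sum>i\<in>?B. \<Sum>r<s. f (i * s + r))"
  proof (rule sum_mono)
    fix i assume "i \<in> ?B"
    then obtain r where "r < s" "a \<le> f (i * s + r)" using large by blast
    moreover have "f (i * s + r) \<le> (\<Sum>r<s. f (i * s + r))"
      using \<open>r < s\<close> nonneg by (intro member_le_sum) auto
    ultimately show "a \<le> (\<Sum>r<s. f (i * s + r))" by linarith
  qed
  also have "\<dots> \<le> (\<Sum>i<n. \<Sum>r<s. f (i * s + r))"
    using nonneg by (intro sum_mono2 sum_nonneg) auto
  also have "\<dots> = (\<Sum>j<n * s. f j)"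
    by (rule sum_lessThan_mult_blocks[symmetric])
  finally show ?thesis .
qed

lemma card_le_mult_card_blocks:
  "card {j. j < n * m \<and> P j} \<le> m * card {i. i < n \<and> (\<exists>k<m. P (i * m + k))}"
proof -
  let ?B = "{i. i < n \<and> (\<exists>k<m. P (i * m + k))}"
  have "{j. j < n * m \<and> P j} \<subseteq> (\<lambda>(i, k). i * m + k) ` (?B \<times> {..<m})"
  proof
    fix j assume j: "j \<in> {j. j < n * m \<and> P j}"
    then have "m > 0" by (cases m) auto
    with j have "(j div m, j mod m) \<in> ?B \<times> {..<m}"
      by (auto simp: less_mult_imp_div_less intro!: exI[of _ "j mod m"])
    moreover have "j = (\<lambda>(i, k). i * m + k) (j div m, j mod m)" by simp
    ultimately show "j \<in> (\<lambda>(i, k). i * m + k) ` (?B \<times> {..<m})" by (rule rev_image_eqI)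
  qed
  then have "card {j. j < n * m \<and> P j} \<le> card ((\<lambda>(i, k). i * m + k) ` (?B \<times> {..<m}))"
    by (rule card_mono[rotated]) simp
  also have "\<dots> \<le> card (?B \<times> {..<m})" by (rule card_image_le) simp
  finally show ?thesis by (simp add: card_cartesian_product mult.commute)
qed

lemma sqnorm_diff_halves:
  "sqnorm n (\<lambda>i. v i - v (i + n)) \<le> 2 * sqnorm (2 * n) v"
proof -
  have "sqnorm n (\<lambda>i. v i - v (i + n)) \<le> (\<Sum>i<n. 2 * ((v i)^2 + (v (i + n))^2))"
    unfolding sqnorm_def
  proof (rule sum_mono)
    fix i
    have "0 \<le> (v i + v (i + n))^2" by simp
    then show "(v i - v (i + n))^2 \<le> 2 * ((v i)^2 + (v (i + n))^2)"
      by (simp add: power2_eq_square algebra_simps)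
  qed
  also have "\<dots> = 2 * sqnorm (2 * n) v"
    unfolding sqnorm_def sum_lessThan_double by (simp add: sum_distrib_left sum.distrib)
  finally show ?thesis .
qed

lemma card_rounding_failures_le:
  fixes w :: "nat \<Rightarrow> real" and wt :: "nat \<Rightarrow> int" and c :: "nat \<Rightarrow> nat \<Rightarrow> real"
  assumes round: "\<forall>j < n * s. \<forall>z::int. \<bar>w j - of_int (wt j)\<bar> \<le> \<bar>w j - of_int z\<bar>"
    and integral: "\<And>i r. i < n \<Longrightarrow> r < s \<Longrightarrow> c i r \<in> \<int>"
    and fail: "\<And>i. i < n \<Longrightarrow> P i \<Longrightarrow> \<exists>r<s. of_int (wt (i * s + r)) \<noteq> c i r"
  shows "card {i. i < n \<and> P i} \<le> 4 * (\<Sum>j<n * s. (w j - c (j div s) (j mod s))^2)"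
proof -
  have "1/4 * card {i. i < n \<and> P i} \<le> (\<Sum>j<n * s. (w j - c (j div s) (j mod s))^2)"
  proof (rule card_le_sum_blocks)
    fix i assume "i < n" "P i"
    then obtain r where r: "r < s" "of_int (wt (i * s + r)) \<noteq> c i r" using fail by blast
    obtain z where z: "c i r = of_int z" using integral[OF \<open>i < n\<close> \<open>r < s\<close>] by (auto elim: Ints_cases)
    let ?j = "i * s + r"
    have "?j < n * s" using \<open>i < n\<close> r(1) by (rule block_index_less)
    then have "1/2 \<le> \<bar>w ?j - of_int z\<bar>"
      using round r(2) z by (intro nearest_int_far_from_other_ints) auto
    from power_mono[OF this, of 2] have "1/4 \<le> (w ?j - c i r)^2"
      using z by (simp add: power2_eq_square)
    moreover have "?j div s = i" "?j mod s = r" using r(1) by simp_all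
    ultimately show "\<exists>r<s. 1/4 \<le> (w (i * s + r) - c ((i * s + r) div s) ((i * s + r) mod s))^2"
      using r(1) by auto
  qed simp
  then show ?thesis by simp
qed

lemma card_block_errors_le:
  fixes wt :: "nat \<Rightarrow> int"
  assumes hx: "binary_vec (2^d * m) x"
    and hround: "\<forall>j < 2^d * s. \<forall>z::int. \<bar>T_map s d y j - of_int (wt j)\<bar> \<le> \<bar>T_map s d y j - of_int z\<bar>"
    and hdec: "\<forall>i < 2^d. \<forall>u. binary_vec m u \<longrightarrow>
                 (\<forall>r<s. of_int (wt (i * s + r)) = int_mat_vec M0 m u r) \<longrightarrow>
                 (\<forall>k<m. xhat (i * m + k) = u k)"
  shows "real (card {i. i < 2^d \<and> (\<exists>k<m. xhat (i * m + k) \<noteq> x (i * m + k))})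
           \<le> 4 / 2^d * sqnorm (2^d * s)
                (\<lambda>i. y i - mat_vec (\<lambda>a b. of_int (kron_hadamard d s m M0 a b)) (2^d * m) x i)"
proof -
  define P where "P = mat_vec (\<lambda>a b. of_int (kron_hadamard d s m M0 a b)) (2^d * m) x"
  define c where "c = (\<lambda>i r. int_mat_vec M0 m (\<lambda>k. x (i * m + k)) r)"
  have residual: "T_map s d y j - c (j div s) (j mod s) = T_map s d (\<lambda>i. y i - P i) j"
    if "j < 2^d * s" for j
    using that unfolding T_map_diff P_def c_def by (simp add: T_map_kron_hadamard)
  have "card {i. i < 2^d \<and> (\<exists>k<m. xhat (i * m + k) \<noteq> x (i * m + k))}
      \<le> 4 * (\<Sum>j<2^d * s. (T_map s d y j - c (j div s) (j mod s))^2)"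
  proof (rule card_rounding_failures_le[OF hround])
    fix i assume i: "i < 2^d" and "\<exists>k<m. xhat (i * m + k) \<noteq> x (i * m + k)"
    with hdec binary_vec_block[OF hx i] show "\<exists>r<s. of_int (wt (i * s + r)) \<noteq> c i r"
      unfolding c_def by blast
  qed (use binary_vec_block[OF hx] int_mat_vec_binary_Ints in \<open>simp add: c_def\<close>)
  also have "\<dots> = 4 * (\<Sum>j<2^d * s. (T_map s d (\<lambda>i. y i - P i) j)^2)"
    using residual by simp
  also have "\<dots> = 4 / 2^d * sqnorm (2^d * s) (\<lambda>i. y i - P i)"
    unfolding sqnorm_def T_map_sum_squares by simp
  finally show ?thesis unfolding P_def .
qed

lemma stacked_measurement_difference:
  assumes hQ: "\<forall>i < N. \<forall>j < n. Q1 i j - Q2 i j = P i j"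
    and hy': "y' = (\<lambda>i. mat_vec (\<lambda>a b. if a < N then Q1 a b else Q2 (a - N) b) n x i + n' i)"
    and "i < N"
  shows "y' i - y' (i + N) - mat_vec P n x i = n' i - n' (i + N)"
proof -
  have "y' i - y' (i + N) = (\<Sum>j<n. (Q1 i j - Q2 i j) * x j) + (n' i - n' (i + N))"
    using \<open>i < N\<close> unfolding hy' mat_vec_def by (simp add: sum_subtractf left_diff_distrib)
  also have "(\<Sum>j<n. (Q1 i j - Q2 i j) * x j) = mat_vec P n x i"
    unfolding mat_vec_def using hQ \<open>i < N\<close> by (intro sum.cong) auto
  finally show ?thesis by simp
qed

theorem mainTheorem4:
  fixes d s m :: nat
    and M0 :: "nat \<Rightarrow> nat \<Rightarrow> int"
    and Q1 Q2 :: "nat \<Rightarrow> nat \<Rightarrow> real"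
    and x n' y' y w xhat :: "nat \<Rightarrow> real"
    and wt :: "nat \<Rightarrow> int"
  assumes hs: "s \<ge> 1" and hm: "m \<ge> 1"
    and hinj: "inj_on_binary s m M0"
    and hQ: "\<forall>i < 2^d * s. \<forall>j < 2^d * m.
               Q1 i j - Q2 i j = of_int (kron_hadamard d s m M0 i j)"
    and hx: "binary_vec (2^d * m) x"
    and hy': "y' = (\<lambda>i. mat_vec (\<lambda>a b. if a < 2^d * s then Q1 a b else Q2 (a - 2^d * s) b)
                        (2^d * m) x i + n' i)"
    and hy: "y = (\<lambda>i. y' i - y' (i + 2^d * s))"
    and hw: "w = T_map s d y"
    and hround: "\<forall>j < 2^d * s. \<forall>z::int. \<bar>w j - of_int (wt j)\<bar> \<le> \<bar>w j - of_int z\<bar>"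
    and hxhat_bin: "binary_vec (2^d * m) xhat"
    and hdec: "\<forall>i < 2^d. \<forall>u. binary_vec m u \<longrightarrow>
                 (\<forall>r<s. of_int (wt (i * s + r)) = int_mat_vec M0 m u r) \<longrightarrow>
                 (\<forall>k<m. xhat (i * m + k) = u k)"
  shows "real (card {i. i < 2^d \<and> (\<exists>k<m. xhat (i * m + k) \<noteq> x (i * m + k))})
           \<le> 4 / 2^d * sqnorm (2^d * s)
                (\<lambda>i. y i - mat_vec (\<lambda>a b. of_int (kron_hadamard d s m M0 a b)) (2^d * m) x i)
       \<and> 4 / 2^d * sqnorm (2^d * s)
                (\<lambda>i. y i - mat_vec (\<lambda>a b. of_int (kron_hadamard d s m M0 a b)) (2^d * m) x i)
           \<le> 8 / 2^d * sqnorm (2^(d+1) * s) n'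
       \<and> real (card {j. j < 2^d * m \<and> xhat j \<noteq> x j}) \<le> 8 * m / 2^d * sqnorm (2^(d+1) * s) n'"
proof -
  let ?P = "mat_vec (\<lambda>a b. of_int (kron_hadamard d s m M0 a b)) (2^d * m) x"
  let ?B = "{i. i < 2^d \<and> (\<exists>k<m. xhat (i * m + k) \<noteq> x (i * m + k))}"
  let ?E = "sqnorm (2^(d+1) * s) n'"
  have blocks: "real (card ?B) \<le> 4 / 2^d * sqnorm (2^d * s) (\<lambda>i. y i - ?P i)"
    using card_block_errors_le[OF hx _ hdec] hround unfolding hw by blast
  have "sqnorm (2^d * s) (\<lambda>i. y i - ?P i) = sqnorm (2^d * s) (\<lambda>i. n' i - n' (i + 2^d * s))"
    unfolding sqnorm_def hy using stacked_measurement_difference[OF _ hy'] hQ by simp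
  also have "\<dots> \<le> 2 * ?E"
    using sqnorm_diff_halves[of "2^d * s" n'] by (simp add: mult.assoc)
  finally have noise: "4 / 2^d * sqnorm (2^d * s) (\<lambda>i. y i - ?P i) \<le> 8 / 2^d * ?E"
    by (simp add: divide_le_cancel)
  have "card {j. j < 2^d * m \<and> xhat j \<noteq> x j} \<le> m * card ?B"
    by (rule card_le_mult_card_blocks)
  then have "real (card {j. j < 2^d * m \<and> xhat j \<noteq> x j}) \<le> m * real (card ?B)"
    by (simp only: of_nat_mult[symmetric] of_nat_le_iff)
  also have "\<dots> \<le> m * (8 / 2^d * ?E)"
    using blocks noise by (intro mult_left_mono) auto
  finally have "real (card {j. j < 2^d * m \<and> xhat j \<noteq> x j}) \<le> 8 * m / 2^d * ?E"
    by (simp add: mult_ac)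
  with blocks noise show ?thesis by blast
qed

end
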